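(* Let $X$ be a compact metric space with more than one point, and let $\Delta:\mathrm{C}(X)^+\setminus\{0\}\to(0,+\infty)$ be an order-preserving map. For every finite set $\mathcal F\subseteq\mathrm{C}(X)$, every $\varepsilon>0$ and every $M\in\mathbb N$, there exist a finite set $\mathcal H\subseteq\mathrm{C}(X)^+\setminus\{0\}$ with $\mathrm{supp}(h)\neq X$ for each $h\in\mathcal H$, and $L\in\mathbb N$, with the following property. If $n>L$ and $\theta:\mathrm{C}(X)\to\mathrm{M}_n(\mathbb C)$ is a unital point-evaluation map with $\mathrm{tr}(\theta(h))>\Delta(h)$ for all $h\in\mathcal H$, then there are integers $n_0,n_1\ge0$ with $n_0+Mn_1=n$ and $n_0\le n_1$, unital point-evaluation maps $\theta_0:\mathrm{C}(X)\to\mathrm{M}_{n_0}(\mathbb C)$ and $\theta_1:\mathrm{C}(X)\to\mathrm{M}_{n_1}(\mathbb C)$ (with $\theta_0=0$ if $n_0=0$), and a permutation unitary $u\in\mathrm{M}_n(\mathbb C)$ such that $$\|\theta(a)-u^*(\theta_0(a)\oplus\underbrace{\theta_1(a)\oplus\cdots\oplus\theta_1(a)}_{M})u\|<\varepsilon,\quad a\in\mathcal F.$$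
   Context: A unital point-evaluation map $\theta:\mathrm{C}(X)\to\mathrm{M}_n(\mathbb C)$ is one of the form $\theta(f)=\mathrm{diag}(f(x_1),\dots,f(x_n))$ for some $x_1,\dots,x_n\in X$. $\mathrm{tr}$ denotes the normalized trace on $\mathrm{M}_n(\mathbb C)$. *)

theory Defs
  imports "HOL-Analysis.Analysis" "Jordan_Normal_Form.Schur_Decomposition"
begin

definition Cfun :: "('a::topological_space \<Rightarrow> complex) set" where
  "Cfun = {f. continuous_on UNIV f}"

text \<open>Positive cone of C(X): pointwise nonnegative (complex order: real and nonnegative).\<close>
definition Cpos :: "('a::topological_space \<Rightarrow> complex) set" where
  "Cpos = {f \<in> Cfun. \<forall>x. 0 \<le> f x}"

definition supp :: "('a::topological_space \<Rightarrow> complex) \<Rightarrow> 'a set" where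
  "supp h = closure {x. h x \<noteq> 0}"

definition point_eval :: "nat \<Rightarrow> (('a::topological_space \<Rightarrow> complex) \<Rightarrow> complex mat) \<Rightarrow> bool" where
  "point_eval n \<theta> \<longleftrightarrow> (\<exists>xs. length xs = n \<and>
      (\<forall>f\<in>Cfun. \<theta> f = mat_diag n (\<lambda>i. f (xs ! i))))"

definition ntr :: "complex mat \<Rightarrow> complex" where
  "ntr A = (\<Sum>i<dim_row A. A $$ (i,i)) / of_nat (dim_row A)"

definition vnorm :: "complex vec \<Rightarrow> real" where
  "vnorm v = sqrt (\<Sum>i<dim_vec v. (cmod (v $ i))\<^sup>2)"

definition opnorm :: "complex mat \<Rightarrow> real" where
  "opnorm A = Sup {vnorm (A *\<^sub>v v) | v. v \<in> carrier_vec (dim_col A) \<and> vnorm v \<le> 1}"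

definition dsum :: "complex mat \<Rightarrow> complex mat \<Rightarrow> complex mat" where
  "dsum A B = four_block_mat A (0\<^sub>m (dim_row A) (dim_col B)) (0\<^sub>m (dim_row B) (dim_col A)) B"

fun dsum_pow :: "nat \<Rightarrow> complex mat \<Rightarrow> complex mat" where
  "dsum_pow 0 B = 0\<^sub>m 0 0"
| "dsum_pow (Suc m) B = dsum B (dsum_pow m B)"

definition perm_unitary :: "nat \<Rightarrow> complex mat \<Rightarrow> bool" where
  "perm_unitary n u \<longleftrightarrow> (\<exists>\<sigma>. \<sigma> permutes {..<n} \<and>
      u = mat n n (\<lambda>(i,j). if j = \<sigma> i then 1 else 0))"

end

theory Submission
  imports Defs
begin

text \<open>
  Cover the values of the functions in \<open>\<F>\<close> by a grid of squares of side \<open>\<epsilon>/4\<close>. Points of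
  \<open>X\<close> whose values under every \<open>a \<in> \<F>\<close> fall into the same squares are \<open>\<epsilon>/2\<close>-close for
  all of \<open>\<F>\<close>, and by compactness only finitely many, say \<open>k\<close>, such cells occur. Hence a
  point evaluation is determined up to \<open>\<epsilon>/2\<close>, after a permutation, by the number of its
  points in each cell. Writing each multiplicity as \<open>q M + r\<close> with \<open>r < M\<close>, the remainders
  give \<open>\<theta>\<^sub>0\<close> on at most \<open>k M\<close> points and the quotients give \<open>\<theta>\<^sub>1\<close>, repeated \<open>M\<close> times;
  once \<open>n > k M (M + 1)\<close> this forces \<open>n\<^sub>0 \<le> n\<^sub>1\<close>.
\<close>

lemma dim_mat_diag [simp]:
  "dim_row (mat_diag n f) = n" "dim_col (mat_diag n f) = n"
  by (simp_all add: mat_diag_def)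

lemma mat_diag_cong:
  "(\<And>i. i < n \<Longrightarrow> f i = g i) \<Longrightarrow> mat_diag n f = mat_diag n g"
  unfolding mat_diag_def by (rule eq_matI) auto

lemma mat_diag_minus:
  "mat_diag n f - mat_diag n g = mat_diag n (\<lambda>i. f i - g i :: 'a :: ab_group_add)"
  unfolding mat_diag_def by (rule eq_matI) auto

lemma dsum_mat_diag:
  "dsum (mat_diag a f) (mat_diag b g) = mat_diag (a + b) (\<lambda>i. if i < a then f i else g (i - a))"
  unfolding dsum_def mat_diag_def by (rule eq_matI) (auto simp: four_block_mat_def Let_def)

lemma dsum_pow_mat_diag:
  "dsum_pow M (mat_diag m f) = mat_diag (M * m) (\<lambda>i. f (i mod m))"
proof (induction M)
  case 0
  show ?case
    by (rule eq_matI) simp_all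
next
  case (Suc M)
  show ?case unfolding dsum_pow.simps Suc dsum_mat_diag mult_Suc
    by (rule mat_diag_cong) (auto simp: le_mod_geq)
qed

lemma nth_concat_replicate:
  "i < M * length ws \<Longrightarrow> concat (replicate M ws) ! i = ws ! (i mod length ws)"
proof (induction M arbitrary: i)
  case (Suc M)
  then show ?case by (cases "i < length ws") (auto simp: nth_append le_mod_geq)
qed simp

lemma dsum_pow_mat_diag_nth:
  "dsum (mat_diag (length zs) (\<lambda>i. f (zs ! i))) (dsum_pow M (mat_diag (length ws) (\<lambda>i. f (ws ! i))))
    = mat_diag (length zs + M * length ws) (\<lambda>i. f ((zs @ concat (replicate M ws)) ! i))"
  unfolding dsum_pow_mat_diag dsum_mat_diag
  by (rule mat_diag_cong) (auto simp: nth_append nth_concat_replicate)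

lemma mat_adjoint_index:
  "i < dim_col A \<Longrightarrow> j < dim_row A \<Longrightarrow> mat_adjoint A $$ (i, j) = conjugate (A $$ (j, i))"
  unfolding mat_adjoint_def mat_of_rows_def by auto

lemma dim_mat_adjoint [simp]:
  "dim_row (mat_adjoint A) = dim_col A" "dim_col (mat_adjoint A) = dim_row A"
  unfolding mat_adjoint_def by auto

lemma permutation_mat_conj_mat_diag:
  fixes d :: "nat \<Rightarrow> complex"
  assumes \<sigma>: "\<sigma> permutes {..<n}"
  defines "u \<equiv> mat n n (\<lambda>(i, j). if j = \<sigma> i then 1 else 0)"
  shows "mat_adjoint u * mat_diag n d * u = mat_diag n (\<lambda>i. d (Hilbert_Choice.inv \<sigma> i))"
    (is "?lhs = ?rhs")
proof (rule eq_matI)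
  fix i j assume "i < dim_row ?rhs" "j < dim_col ?rhs"
  then have i: "i < n" and j: "j < n"
    by simp_all
  have inv_i: "Hilbert_Choice.inv \<sigma> i < n"
    using permutes_in_image[OF permutes_inv[OF \<sigma>]] i by simp
  have "mat_adjoint u * mat_diag n d = mat n n (\<lambda>(i, j). (if i = \<sigma> j then 1 else 0) * d j)"
    by (subst mat_diag_mult_right[of _ n n]) (auto simp: u_def mat_adjoint_index intro!: eq_matI)
  then have "(mat_adjoint u * mat_diag n d * u) $$ (i, j)
      = (\<Sum>k<n. (if i = \<sigma> k then 1 else 0) * d k * (if j = \<sigma> k then 1 else 0))"
    using i j by (auto simp: u_def scalar_prod_def lessThan_atLeast0 intro!: sum.cong)
  also have "\<dots> = (\<Sum>k<n. if k = Hilbert_Choice.inv \<sigma> i then d k * (if j = i then 1 else 0) else 0)"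
    using \<sigma> by (intro sum.cong) (auto simp: permutes_inverses)
  also have "\<dots> = ?rhs $$ (i, j)"
    using i j inv_i by (simp add: mat_diag_def)
  finally show "?lhs $$ (i, j) = ?rhs $$ (i, j)" .
qed (auto simp: u_def mat_diag_def)

lemma mat_diag_mult_vec_index:
  fixes d :: "nat \<Rightarrow> complex" and v :: "complex vec"
  assumes "v \<in> carrier_vec n" "i < n"
  shows "(mat_diag n d *\<^sub>v v) $ i = d i * v $ i"
proof -
  have "(mat_diag n d *\<^sub>v v) $ i = (\<Sum>j<n. (if i = j then d j else 0) * v $ j)"
    using assms by (simp add: mat_diag_def scalar_prod_def lessThan_atLeast0)
  also have "\<dots> = (\<Sum>j<n. if j = i then d j * v $ j else 0)"
    by (rule sum.cong) auto
  finally show ?thesis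
    using assms(2) by simp
qed

lemma opnorm_mat_diag_le:
  assumes c: "c \<ge> 0" and d: "\<And>i. i < n \<Longrightarrow> cmod (d i) \<le> c"
  shows "opnorm (mat_diag n d) \<le> c"
  unfolding opnorm_def
proof (rule cSup_least)
  have "vnorm (0\<^sub>v n) \<le> 1"
    by (simp add: vnorm_def)
  then show "{vnorm (mat_diag n d *\<^sub>v v) |v. v \<in> carrier_vec (dim_col (mat_diag n d)) \<and> vnorm v \<le> 1} \<noteq> {}"
    by (auto simp: mat_diag_def intro!: exI[of _ "0\<^sub>v n"])
next
  fix x assume "x \<in> {vnorm (mat_diag n d *\<^sub>v v) |v. v \<in> carrier_vec (dim_col (mat_diag n d)) \<and> vnorm v \<le> 1}"
  then obtain v where v: "v \<in> carrier_vec n" "vnorm v \<le> 1" and x: "x = vnorm (mat_diag n d *\<^sub>v v)"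
    by (auto simp: mat_diag_def)
  have "x = sqrt (\<Sum>i<n. (cmod ((mat_diag n d *\<^sub>v v) $ i))\<^sup>2)"
    unfolding x vnorm_def by simp
  also have "\<dots> = sqrt (\<Sum>i<n. (cmod (d i * v $ i))\<^sup>2)"
    by (intro arg_cong[where f = sqrt] sum.cong) (auto simp: mat_diag_mult_vec_index[OF v(1)] simp del: index_mult_mat_vec)
  also have "\<dots> \<le> sqrt (\<Sum>i<n. c\<^sup>2 * (cmod (v $ i))\<^sup>2)"
    using d c by (intro real_sqrt_le_mono sum_mono)
      (simp add: norm_mult power_mult_distrib mult_right_mono power_mono)
  also have "\<dots> = c * vnorm v"
    using v(1) c by (simp add: vnorm_def sum_distrib_left[symmetric] real_sqrt_mult)
  also have "\<dots> \<le> c"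
    using v c by (simp add: mult_left_le)
  finally show "x \<le> c" .
qed

definition grid_cell :: "real \<Rightarrow> complex \<Rightarrow> int \<times> int" where
  "grid_cell d z = (\<lfloor>Re z / d\<rfloor>, \<lfloor>Im z / d\<rfloor>)"

lemma floor_divide_eq_imp_dist_less:
  fixes s t d :: real
  assumes d: "d > 0" and eq: "\<lfloor>s / d\<rfloor> = \<lfloor>t / d\<rfloor>"
  shows "\<bar>s - t\<bar> < d"
proof -
  have "\<bar>s / d - t / d\<bar> < 1"
    using eq floor_correct[of "s / d"] floor_correct[of "t / d"] by linarith
  then have "\<bar>(s - t) / d\<bar> < 1"
    by (simp add: diff_divide_distrib)
  then have "\<bar>s - t\<bar> / d < 1"
    using d by simp
  then show ?thesis
    using d by (simp add: divide_less_eq)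
qed

lemma floor_divide_mem_bounds:
  fixes t B d :: real
  assumes "d > 0" "\<bar>t\<bar> \<le> B"
  shows "\<lfloor>t / d\<rfloor> \<in> {\<lfloor>- B / d\<rfloor>..\<lfloor>B / d\<rfloor>}"
proof -
  have "- B / d \<le> t / d" "t / d \<le> B / d"
    using assms divide_right_mono[of "- B" t d] divide_right_mono[of t B d] by auto
  then show ?thesis
    by (simp add: floor_mono)
qed

lemma finite_grid_cell_image:
  assumes d: "d > 0" and S: "bounded S"
  shows "finite (grid_cell d ` S)"
proof -
  obtain B where B: "\<And>z. z \<in> S \<Longrightarrow> cmod z \<le> B"
    using S unfolding bounded_iff by blast
  have "grid_cell d z \<in> {\<lfloor>- B / d\<rfloor>..\<lfloor>B / d\<rfloor>} \<times> {\<lfloor>- B / d\<rfloor>..\<lfloor>B / d\<rfloor>}" if "z \<in> S" for z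
    using B[OF that] abs_Re_le_cmod[of z] abs_Im_le_cmod[of z]
    unfolding grid_cell_def by (intro SigmaI floor_divide_mem_bounds d) linarith+
  then have "grid_cell d ` S \<subseteq> {\<lfloor>- B / d\<rfloor>..\<lfloor>B / d\<rfloor>} \<times> {\<lfloor>- B / d\<rfloor>..\<lfloor>B / d\<rfloor>}"
    by blast
  then show ?thesis
    by (rule finite_subset) simp
qed
lemma grid_cell_eq_imp_dist_less:
  assumes d: "d > 0" and eq: "grid_cell d z = grid_cell d w"
  shows "cmod (z - w) < 2 * d"
proof -
  have "\<bar>Re z - Re w\<bar> < d" "\<bar>Im z - Im w\<bar> < d"
    using eq unfolding grid_cell_def by (auto intro: floor_divide_eq_imp_dist_less[OF d])
  moreover have "cmod (z - w) \<le> \<bar>Re (z - w)\<bar> + \<bar>Im (z - w)\<bar>"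
    by (rule cmod_le)
  ultimately show ?thesis
    by simp
qed

lemma finite_range_map_grid_cell:
  assumes d: "d > 0" and bdd: "\<And>a. a \<in> set fs \<Longrightarrow> bounded (range a)"
  shows "finite (range (\<lambda>x. map (\<lambda>a. grid_cell d (a x)) fs))"
proof -
  define T where "T = (\<Union>a\<in>set fs. grid_cell d ` range a)"
  have "finite T"
    unfolding T_def using finite_grid_cell_image[OF d bdd] by simp
  moreover have "grid_cell d (a x) \<in> T" if "a \<in> set fs" for a x
    using that unfolding T_def by (blast intro: imageI rangeI)
  then have "range (\<lambda>x. map (\<lambda>a. grid_cell d (a x)) fs) \<subseteq> {cs. set cs \<subseteq> T \<and> length cs = length fs}"
    by auto
  ultimately show ?thesis
    using finite_lists_length_eq finite_subset by blast
qed

lemma count_mset_map_concat_replicate: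
  "count (mset (map f (concat (replicate M xs)))) y = M * count (mset (map f xs)) y"
  by (induction M) auto

lemma count_mset_concat_map_replicate:
  assumes "distinct cs" "\<And>c. c \<in> set cs \<Longrightarrow> key (rep c) = c"
  shows "count (mset (map key (concat (map (\<lambda>c. replicate (f c) (rep c)) cs)))) y
    = (if y \<in> set cs then f y else 0)"
  using assms by (induction cs) auto

lemma regroup_mset:
  fixes key :: "'a \<Rightarrow> 'k" and xs :: "'a list"
  assumes fin: "finite (range key)" and big: "card (range key) * M * (M + 1) < length xs"
  shows "\<exists>zs ws. mset (map key (zs @ concat (replicate M ws))) = mset (map key xs)
    \<and> length zs + M * length ws = length xs \<and> length zs \<le> length ws"
proof (cases "M = 0")
  case True
  then show ?thesis by auto
next
  case False
  define K where "K = mset (map key xs)"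
  obtain cs where cs: "set cs = range key" "distinct cs"
    using finite_distinct_list[OF fin] by blast
  define rep where "rep c = (SOME x. key x = c)" for c
  have rep: "key (rep c) = c" if "c \<in> set cs" for c
    using that cs(1) unfolding rep_def by (metis (mono_tags) rangeE someI)
  define zs where "zs = concat (map (\<lambda>c. replicate (count K c mod M) (rep c)) cs)"
  define ws where "ws = concat (map (\<lambda>c. replicate (count K c div M) (rep c)) cs)"
  have K_outside: "count K y = 0" if "y \<notin> set cs" for y
    using that cs(1) unfolding K_def by (auto simp: count_eq_zero_iff)
  have ms: "mset (map key (zs @ concat (replicate M ws))) = K"
  proof (rule multiset_eqI)
    fix y
    have "count (mset (map key (zs @ concat (replicate M ws)))) y
        = count (mset (map key zs)) y + M * count (mset (map key ws)) y"
      by (simp only: map_append mset_append count_union count_mset_map_concat_replicate)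
    also have "\<dots> = count K y"
      unfolding zs_def ws_def
      by (simp add: count_mset_concat_map_replicate[where key = key and rep = rep, OF cs(2) rep]
          K_outside del: mset_map)
    finally show "count (mset (map key (zs @ concat (replicate M ws)))) y = count K y" .
  qed
  have len: "length zs + M * length ws = length xs"
    using mset_eq_length[OF ms[unfolded K_def]] by (simp add: length_concat sum_list_replicate)
  have "length zs = (\<Sum>c\<leftarrow>cs. count K c mod M)"
    by (simp add: zs_def length_concat comp_def)
  also have "\<dots> \<le> (\<Sum>c\<leftarrow>cs. M)"
    using False by (intro sum_list_mono) simp
  also have "\<dots> = card (range key) * M"
    using cs distinct_card by (fastforce simp: sum_list_triv)
  finally have zs_le: "length zs \<le> card (range key) * M" .
  have "card (range key) * M * (M + 1) = card (range key) * M * M + card (range key) * M"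
    by (simp add: algebra_simps)
  with len big zs_le have "M * (card (range key) * M) < M * length ws"
    by (simp only: mult.commute[of M "card (range key) * M"])
  then have "length zs \<le> length ws"
    using zs_le by simp
  with ms len show ?thesis
    unfolding K_def by blast
qed

lemma permutation_matching_keys:
  assumes "mset (map key ys) = mset (map key xs)"
  obtains p where "p permutes {..<length xs}" "\<And>i. i < length xs \<Longrightarrow> key (ys ! p i) = key (xs ! i)"
proof -
  have len: "length ys = length xs"
    using mset_eq_length[OF assms] by simp
  obtain p where p: "p permutes {..<length xs}" "permute_list p (map key ys) = map key xs"
    using mset_eq_permutation[OF assms[symmetric]] len by (metis length_map)
  have "key (ys ! p i) = key (xs ! i)" if i: "i < length xs" for i
  proof -
    have "key (xs ! i) = permute_list p (map key ys) ! i"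
      using p(2) i by simp
    also have "\<dots> = map key ys ! p i"
      using permute_list_nth[of p "map key ys"] p(1) len i by simp
    also have "\<dots> = key (ys ! p i)"
      using permutes_in_image[OF p(1)] len i by simp
    finally show ?thesis
      by simp
  qed
  with p(1) show thesis
    using that by blast
qed

lemma point_eval_regroup:
  fixes key :: "'a::topological_space \<Rightarrow> 'k" and \<theta> :: "('a \<Rightarrow> complex) \<Rightarrow> complex mat"
  assumes fin: "finite (range key)" and big: "card (range key) * M * (M + 1) < n"
    and \<theta>: "point_eval n \<theta>" and A: "A \<subseteq> Cfun" and c: "c \<ge> 0"
    and close: "\<And>a x y. a \<in> A \<Longrightarrow> key x = key y \<Longrightarrow> cmod (a x - a y) \<le> c"
  shows "\<exists>n0 n1 \<theta>0 \<theta>1 u. n0 + M * n1 = n \<and> n0 \<le> n1 \<and>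
    point_eval n0 \<theta>0 \<and> point_eval n1 \<theta>1 \<and> perm_unitary n u \<and>
    (\<forall>a\<in>A. opnorm (\<theta> a - mat_adjoint u * dsum (\<theta>0 a) (dsum_pow M (\<theta>1 a)) * u) \<le> c)"
proof -
  obtain xs where xs: "length xs = n" and \<theta>_eq: "\<And>f. f \<in> Cfun \<Longrightarrow> \<theta> f = mat_diag n (\<lambda>i. f (xs ! i))"
    using \<theta> unfolding point_eval_def by blast
  obtain zs ws where ms: "mset (map key (zs @ concat (replicate M ws))) = mset (map key xs)"
    and len: "length zs + M * length ws = n" and le: "length zs \<le> length ws"
    using regroup_mset[OF fin big[folded xs]] xs by blast
  define ys where "ys = zs @ concat (replicate M ws)"
  obtain p where p: "p permutes {..<n}" and keys: "\<And>i. i < n \<Longrightarrow> key (ys ! p i) = key (xs ! i)"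
    using permutation_matching_keys[OF ms] xs unfolding ys_def by metis
  define \<theta>0 where "\<theta>0 f = mat_diag (length zs) (\<lambda>i. f (zs ! i))" for f :: "'a \<Rightarrow> complex"
  define \<theta>1 where "\<theta>1 f = mat_diag (length ws) (\<lambda>i. f (ws ! i))" for f :: "'a \<Rightarrow> complex"
  define u where "u = mat n n (\<lambda>(i, j). if j = Hilbert_Choice.inv p i then 1 else (0::complex))"
  have inv_p: "Hilbert_Choice.inv p permutes {..<n}"
    using permutes_inv[OF p] .
  have "opnorm (\<theta> a - mat_adjoint u * dsum (\<theta>0 a) (dsum_pow M (\<theta>1 a)) * u) \<le> c" if a: "a \<in> A" for a
  proof -
    have "mat_adjoint u * dsum (\<theta>0 a) (dsum_pow M (\<theta>1 a)) * u = mat_diag n (\<lambda>i. a (ys ! p i))"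
      using permutation_mat_conj_mat_diag[OF inv_p]
      unfolding \<theta>0_def \<theta>1_def dsum_pow_mat_diag_nth len u_def ys_def
      by (simp add: inv_inv_eq[OF permutes_bij[OF p]])
    then have "\<theta> a - mat_adjoint u * dsum (\<theta>0 a) (dsum_pow M (\<theta>1 a)) * u
        = mat_diag n (\<lambda>i. a (xs ! i) - a (ys ! p i))"
      using a A by (simp add: \<theta>_eq subset_iff mat_diag_minus)
    also have "opnorm \<dots> \<le> c"
      using c close[OF a] keys by (intro opnorm_mat_diag_le) auto
    finally show ?thesis .
  qed
  moreover have "point_eval (length zs) \<theta>0" "point_eval (length ws) \<theta>1"
    unfolding point_eval_def \<theta>0_def \<theta>1_def by auto
  moreover have "perm_unitary n u"
    unfolding perm_unitary_def u_def using inv_p by blast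
  ultimately show ?thesis
    using len le by blast
qed

theorem lemma7p7:
  fixes \<Delta> :: "('a::metric_space \<Rightarrow> complex) \<Rightarrow> real"
  assumes compact: "compact (UNIV :: 'a set)"
    and nontriv: "\<exists>x y :: 'a. x \<noteq> y"
    and Delta_pos: "\<forall>h \<in> Cpos - {\<lambda>_. 0}. \<Delta> h > 0"
    and Delta_mono: "\<forall>f \<in> Cpos - {\<lambda>_. 0}. \<forall>g \<in> Cpos - {\<lambda>_. 0}. (\<forall>x. f x \<le> g x) \<longrightarrow> \<Delta> f \<le> \<Delta> g"
    and F: "finite \<F>" "\<F> \<subseteq> Cfun"
    and eps: "(\<epsilon>::real) > 0"
  shows "\<exists>\<H> (L::nat). finite \<H> \<and> \<H> \<subseteq> Cpos - {\<lambda>_. 0} \<and> (\<forall>h\<in>\<H>. supp h \<noteq> UNIV) \<and>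
     (\<forall>n \<theta>. n > L \<and> point_eval n \<theta> \<and> (\<forall>h\<in>\<H>. ntr (\<theta> h) > complex_of_real (\<Delta> h)) \<longrightarrow>
        (\<exists>n0 n1 \<theta>0 \<theta>1 u. n0 + M * n1 = n \<and> n0 \<le> n1 \<and>
           point_eval n0 \<theta>0 \<and> point_eval n1 \<theta>1 \<and> perm_unitary n u \<and>
           (\<forall>a\<in>\<F>. opnorm (\<theta> a - mat_adjoint u * dsum (\<theta>0 a) (dsum_pow M (\<theta>1 a)) * u) < \<epsilon>)))"
proof -
  obtain fs where fs: "set fs = \<F>"
    using finite_list[OF F(1)] ..
  define key where "key x = map (\<lambda>a. grid_cell (\<epsilon> / 4) (a x)) fs" for x :: 'a
  have "bounded (range a)" if "a \<in> set fs" for a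
    using that fs F(2) compact by (auto simp: Cfun_def intro: compact_imp_bounded compact_continuous_image)
  then have fin: "finite (range key)"
    unfolding key_def using eps by (intro finite_range_map_grid_cell) auto
  have close: "cmod (a x - a y) \<le> \<epsilon> / 2" if "a \<in> \<F>" "key x = key y" for a x y
    using grid_cell_eq_imp_dist_less[of "\<epsilon> / 4" "a x" "a y"] that eps fs
    by (auto simp: key_def map_eq_conv)
  have "\<exists>n0 n1 \<theta>0 \<theta>1 u. n0 + M * n1 = n \<and> n0 \<le> n1 \<and>
           point_eval n0 \<theta>0 \<and> point_eval n1 \<theta>1 \<and> perm_unitary n u \<and>
           (\<forall>a\<in>\<F>. opnorm (\<theta> a - mat_adjoint u * dsum (\<theta>0 a) (dsum_pow M (\<theta>1 a)) * u) < \<epsilon>)"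
    if "card (range key) * M * (M + 1) < n" "point_eval n \<theta>" for n \<theta>
  proof -
    have "\<epsilon> / 2 \<ge> 0" "\<And>r. r \<le> \<epsilon> / 2 \<Longrightarrow> r < \<epsilon>"
      using eps by auto
    with point_eval_regroup[OF fin that F(2) _ close] show ?thesis
      by fastforce
  qed
  then show ?thesis
    by (intro exI[of _ "{}"] exI[of _ "card (range key) * M * (M + 1)"]) auto
qed

end
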